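(* Let $M$ be a generalized modularity matrix on $V$ with induced modularity function $Q$, and let $S_1,\dots,S_k$ ($k\ge1$) be pairwise disjoint nonempty subsets of $V$ such that $Q(S_i)>0$ for all $i$ and $Q(S_i,S_j)<0$ for all $i\neq j$. If there exist positive numbers $\alpha_1,\dots,\alpha_k$ such that $$\alpha_iQ(S_i)>\sum_{j\ne i}\alpha_j\,|Q(S_i,S_j)|\qquad\text{for all } i=1,\dots,k,$$ then $M$ has at least $k$ positive eigenvalues (counted with multiplicity).
   Context: Let $V=\{1,\dots,n\}$ and let $A\in\mathbb{R}^{n\times n}$ be the adjacency matrix of an undirected connected weighted graph on $V$, possibly with loops, i.e. $A$ is symmetric, entrywise nonnegative and irreducible. A generalized modularity matrix is any matrix $M=A+\Delta-\sigma vv^{\mathsf T}$ where $\Delta$ is a real diagonal matrix, $v\ne0$ is entrywise nonnegative, and $\sigma>0$. For $S\subseteq V$, $\mathbb{1}_S$ is its characteristic vector; $Q(S)=\mathbb{1}_S^{\mathsf T}M\mathbb{1}_S$, and for disjoint $S,T$, $Q(S,T)=\mathbb{1}_S^{\mathsf T}M\mathbb{1}_T$. *)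

theory Defs
  imports "Jordan_Normal_Form.Char_Poly"
begin

text \<open>Vertices are V = {0..<n} (0-indexed). Matrices are Jordan_Normal_Form matrices.\<close>

definition sym_mat :: "real mat \<Rightarrow> bool" where
  "sym_mat A \<longleftrightarrow> A\<^sup>T = A"

text \<open>Irreducibility of a nonnegative symmetric matrix: the weighted graph with an edge
  i -- j whenever A(i,j) > 0 is connected on {0..<n}.\<close>
definition adj_rel :: "nat \<Rightarrow> real mat \<Rightarrow> (nat \<times> nat) set" where
  "adj_rel n A = {(i, j). i < n \<and> j < n \<and> A $$ (i, j) > 0}"

definition irreducible_mat :: "nat \<Rightarrow> real mat \<Rightarrow> bool" where
  "irreducible_mat n A \<longleftrightarrow> (\<forall>i<n. \<forall>j<n. i \<noteq> j \<longrightarrow> (i, j) \<in> (adj_rel n A)\<^sup>+)"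

definition adjacency_matrix :: "nat \<Rightarrow> real mat \<Rightarrow> bool" where
  "adjacency_matrix n A \<longleftrightarrow> A \<in> carrier_mat n n \<and> sym_mat A \<and>
     (\<forall>i<n. \<forall>j<n. A $$ (i, j) \<ge> 0) \<and> irreducible_mat n A"

definition outer_prod :: "real vec \<Rightarrow> real vec \<Rightarrow> real mat" where
  "outer_prod v w = mat (dim_vec v) (dim_vec w) (\<lambda>(i, j). v $ i * w $ j)"

definition gen_modularity_matrix :: "nat \<Rightarrow> real mat \<Rightarrow> bool" where
  "gen_modularity_matrix n M \<longleftrightarrow>
     (\<exists>A Delta v \<sigma>. adjacency_matrix n A \<and> Delta \<in> carrier_mat n n \<and> diagonal_mat Delta \<and>
        v \<in> carrier_vec n \<and> v \<noteq> 0\<^sub>v n \<and> (\<forall>i<n. v $ i \<ge> 0) \<and> \<sigma> > 0 \<and>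
        M = A + Delta - \<sigma> \<cdot>\<^sub>m outer_prod v v)"

definition charvec :: "nat \<Rightarrow> nat set \<Rightarrow> real vec" where
  "charvec n S = vec n (\<lambda>i. if i \<in> S then 1 else 0)"

definition Qmod :: "real mat \<Rightarrow> nat set \<Rightarrow> nat set \<Rightarrow> real" where
  "Qmod M S T = charvec (dim_row M) S \<bullet> (M *\<^sub>v charvec (dim_col M) T)"

definition num_pos_eigenvalues :: "real mat \<Rightarrow> nat" where
  "num_pos_eigenvalues M =
     (\<Sum>a\<in>{a. a > 0 \<and> poly (char_poly M) a = 0}. order a (char_poly M))"

end

theory Submission
  imports Defs
begin

text \<open>
  For \<open>y = \<Sum>\<^sub>i c\<^sub>i 1\<^bsub>S\<^sub>i\<^esub>\<close> one has \<open>y\<^sup>T M y = \<Sum>\<^sub>i\<^sub>j c\<^sub>i c\<^sub>j Q(S\<^sub>i, S\<^sub>j)\<close>. Bounding every cross term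
  by the weighted AM-GM inequality with weights \<open>\<alpha>\<close>, the dominance hypothesis makes this
  positive for every \<open>c \<noteq> 0\<close>, so the quadratic form of the symmetric matrix \<open>M\<close> is positive
  definite on a \<open>k\<close>-dimensional subspace. Diagonalising \<open>M\<close> orthogonally (by Householder
  deflation) writes \<open>y\<^sup>T M y = \<Sum>\<^sub>i d\<^sub>i (p\<^sub>i \<bullet> y)\<^sup>2\<close> with \<open>char_poly M = \<Prod>\<^sub>i (x - d\<^sub>i)\<close>. If fewer
  than \<open>k\<close> of the \<open>d\<^sub>i\<close> were positive, some nonzero \<open>y\<close> in the subspace would be orthogonal
  to all \<open>p\<^sub>i\<close> with \<open>d\<^sub>i > 0\<close>, forcing \<open>y\<^sup>T M y \<le> 0\<close>.
\<close>

section \<open>Diagonally dominant quadratic forms\<close>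

lemma weighted_abs_mult_le:
  fixes a b x y :: real
  assumes "a > 0" "b > 0"
  shows "2 * \<bar>x * y\<bar> \<le> b / a * x\<^sup>2 + a / b * y\<^sup>2"
proof -
  have "0 \<le> (b * \<bar>x\<bar> - a * \<bar>y\<bar>)\<^sup>2" by simp
  then have "2 * \<bar>x * y\<bar> * (a * b) \<le> b\<^sup>2 * x\<^sup>2 + a\<^sup>2 * y\<^sup>2"
    by (simp add: power2_eq_square abs_mult algebra_simps)
  with assms show ?thesis
    by (simp add: field_simps power2_eq_square)
qed

lemma off_diagonal_form_lower_bound:
  fixes B :: "'i \<Rightarrow> 'i \<Rightarrow> real" and \<alpha> c :: "'i \<Rightarrow> real"
  assumes "finite I"
    and sym: "\<And>i j. i \<in> I \<Longrightarrow> j \<in> I \<Longrightarrow> B i j = B j i"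
    and \<alpha>_pos: "\<And>i. i \<in> I \<Longrightarrow> \<alpha> i > 0"
  shows "- (\<Sum>i\<in>I. (c i)\<^sup>2 / \<alpha> i * (\<Sum>j\<in>I - {i}. \<alpha> j * \<bar>B i j\<bar>))
    \<le> (\<Sum>i\<in>I. \<Sum>j\<in>I - {i}. c i * c j * B i j)"
proof -
  define t where "t i j = (if i = j then 0 else (c i)\<^sup>2 / \<alpha> i * (\<alpha> j * \<bar>B i j\<bar>))" for i j
  have t_diag: "t i i = 0" for i
    by (simp add: t_def)
  have pair: "- (t i j + t j i) / 2 \<le> c i * c j * B i j" if "i \<in> I" "j \<in> I" "i \<noteq> j" for i j
  proof -
    have "- (c i * c j * B i j) \<le> \<bar>c i * c j\<bar> * \<bar>B i j\<bar>"
      using abs_ge_minus_self[of "c i * c j * B i j"] by (simp add: abs_mult)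
    also have "\<dots> \<le> (\<alpha> j / \<alpha> i * (c i)\<^sup>2 + \<alpha> i / \<alpha> j * (c j)\<^sup>2) / 2 * \<bar>B i j\<bar>"
      using weighted_abs_mult_le[OF \<alpha>_pos[OF that(1)] \<alpha>_pos[OF that(2)], of "c i" "c j"]
      by (intro mult_right_mono) auto
    also have "\<dots> = (t i j + t j i) / 2"
      using that sym[of j i] by (simp add: t_def algebra_simps)
    finally show ?thesis by simp
  qed
  have "(\<Sum>i\<in>I. \<Sum>j\<in>I. t j i) = (\<Sum>i\<in>I. \<Sum>j\<in>I. t i j)"
    by (rule sum.swap)
  then have "- (\<Sum>i\<in>I. \<Sum>j\<in>I. t i j) = (\<Sum>i\<in>I. \<Sum>j\<in>I. - (t i j + t j i) / 2)"
    by (simp add: sum_subtractf sum_negf flip: sum_divide_distrib)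
  also have "\<dots> = (\<Sum>i\<in>I. \<Sum>j\<in>I - {i}. - (t i j + t j i) / 2)"
    by (rule sum.cong[OF refl]) (simp add: sum_diff1 t_diag \<open>finite I\<close>)
  also have "\<dots> \<le> (\<Sum>i\<in>I. \<Sum>j\<in>I - {i}. c i * c j * B i j)"
    by (intro sum_mono pair) auto
  also have "(\<Sum>i\<in>I. \<Sum>j\<in>I. t i j) = (\<Sum>i\<in>I. (c i)\<^sup>2 / \<alpha> i * (\<Sum>j\<in>I - {i}. \<alpha> j * \<bar>B i j\<bar>))"
    using \<open>finite I\<close> by (intro sum.cong refl) (simp add: t_def sum.If_cases sum_distrib_left Diff_eq Int_commute)
  finally show ?thesis .
qed

lemma diagonally_dominant_form_pos:
  fixes B :: "'i \<Rightarrow> 'i \<Rightarrow> real" and \<alpha> c :: "'i \<Rightarrow> real"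
  assumes "finite I"
    and sym: "\<And>i j. i \<in> I \<Longrightarrow> j \<in> I \<Longrightarrow> B i j = B j i"
    and \<alpha>_pos: "\<And>i. i \<in> I \<Longrightarrow> \<alpha> i > 0"
    and dominant: "\<And>i. i \<in> I \<Longrightarrow> \<alpha> i * B i i > (\<Sum>j\<in>I - {i}. \<alpha> j * \<bar>B i j\<bar>)"
    and nonzero: "\<exists>i\<in>I. c i \<noteq> 0"
  shows "(\<Sum>i\<in>I. \<Sum>j\<in>I. c i * c j * B i j) > 0"
proof -
  let ?R = "\<lambda>i. \<Sum>j\<in>I - {i}. \<alpha> j * \<bar>B i j\<bar>"
  from nonzero obtain i where i: "i \<in> I" "c i \<noteq> 0" by blast
  have "0 < (\<Sum>i\<in>I. (c i)\<^sup>2 / \<alpha> i * (\<alpha> i * B i i - ?R i))"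
  proof (rule sum_pos2[OF \<open>finite I\<close> i(1)])
    show "0 < (c i)\<^sup>2 / \<alpha> i * (\<alpha> i * B i i - ?R i)"
      using i \<alpha>_pos[OF i(1)] dominant[OF i(1)] by simp
    show "\<And>i. i \<in> I \<Longrightarrow> 0 \<le> (c i)\<^sup>2 / \<alpha> i * (\<alpha> i * B i i - ?R i)"
      using \<alpha>_pos dominant by (simp add: less_imp_le)
  qed
  also have "\<dots> = (\<Sum>i\<in>I. (c i)\<^sup>2 * B i i) - (\<Sum>i\<in>I. (c i)\<^sup>2 / \<alpha> i * ?R i)"
    unfolding sum_subtractf[symmetric] using \<alpha>_pos
    by (intro sum.cong refl) (simp add: right_diff_distrib less_imp_neq[symmetric])
  also have "\<dots> \<le> (\<Sum>i\<in>I. (c i)\<^sup>2 * B i i) + (\<Sum>i\<in>I. \<Sum>j\<in>I - {i}. c i * c j * B i j)"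
    using off_diagonal_form_lower_bound[OF assms(1-3)] by simp
  also have "\<dots> = (\<Sum>i\<in>I. \<Sum>j\<in>I. c i * c j * B i j)"
    using \<open>finite I\<close> by (simp add: sum.remove[where x = i for i] sum.distrib power2_eq_square cong: sum.cong)
  finally show ?thesis .
qed

section \<open>Linear combinations and homogeneous systems\<close>

lemma lincomb_scalar_prod_left:
  fixes x :: "'i \<Rightarrow> 'a :: comm_ring vec" and c :: "'i \<Rightarrow> 'a"
  assumes "\<And>i. i \<in> I \<Longrightarrow> x i \<in> carrier_vec n" "w \<in> carrier_vec n"
  shows "vec n (\<lambda>l. \<Sum>i\<in>I. c i * x i $ l) \<bullet> w = (\<Sum>i\<in>I. c i * (x i \<bullet> w))"
proof -
  have "vec n (\<lambda>l. \<Sum>i\<in>I. c i * x i $ l) \<bullet> w = (\<Sum>l<n. \<Sum>i\<in>I. c i * x i $ l * w $ l)"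
    using assms by (simp add: scalar_prod_def sum_distrib_right lessThan_atLeast0)
  also have "\<dots> = (\<Sum>i\<in>I. \<Sum>l<n. c i * x i $ l * w $ l)"
    by (rule sum.swap)
  also have "\<dots> = (\<Sum>i\<in>I. c i * (x i \<bullet> w))"
    using assms by (intro sum.cong refl) (auto simp: scalar_prod_def sum_distrib_left mult.assoc lessThan_atLeast0)
  finally show ?thesis .
qed

lemma mult_mat_vec_lincomb:
  fixes x :: "'i \<Rightarrow> 'a :: comm_ring vec" and c :: "'i \<Rightarrow> 'a"
  assumes "\<And>i. i \<in> I \<Longrightarrow> x i \<in> carrier_vec n" "M \<in> carrier_mat m n"
  shows "M *\<^sub>v vec n (\<lambda>l. \<Sum>i\<in>I. c i * x i $ l) = vec m (\<lambda>l. \<Sum>i\<in>I. c i * (M *\<^sub>v x i) $ l)"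
proof (rule eq_vecI)
  fix l assume "l < dim_vec (vec m (\<lambda>l. \<Sum>i\<in>I. c i * (M *\<^sub>v x i) $ l))"
  then have l: "l < m" by simp
  have "(M *\<^sub>v vec n (\<lambda>l. \<Sum>i\<in>I. c i * x i $ l)) $ l = vec n (\<lambda>l. \<Sum>i\<in>I. c i * x i $ l) \<bullet> row M l"
    using assms l by (simp add: comm_scalar_prod[of _ n])
  also have "\<dots> = (\<Sum>i\<in>I. c i * (x i \<bullet> row M l))"
    using assms l by (intro lincomb_scalar_prod_left) auto
  also have "\<dots> = (\<Sum>i\<in>I. c i * (M *\<^sub>v x i) $ l)"
    using assms l by (intro sum.cong refl) (auto simp: comm_scalar_prod[of _ n])
  finally show "(M *\<^sub>v vec n (\<lambda>l. \<Sum>i\<in>I. c i * x i $ l)) $ l = vec m (\<lambda>l. \<Sum>i\<in>I. c i * (M *\<^sub>v x i) $ l) $ l"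
    using l by simp
qed (use assms in simp)

lemma lincomb_quadratic_form:
  fixes x :: "'i \<Rightarrow> 'a :: comm_ring vec" and c :: "'i \<Rightarrow> 'a"
  assumes x: "\<And>i. i \<in> I \<Longrightarrow> x i \<in> carrier_vec n" and M: "M \<in> carrier_mat n n"
  defines "y \<equiv> vec n (\<lambda>l. \<Sum>i\<in>I. c i * x i $ l)"
  shows "y \<bullet> (M *\<^sub>v y) = (\<Sum>i\<in>I. \<Sum>j\<in>I. c i * c j * (x i \<bullet> (M *\<^sub>v x j)))"
proof -
  have "y \<bullet> (M *\<^sub>v y) = (\<Sum>i\<in>I. c i * (x i \<bullet> (M *\<^sub>v y)))"
    unfolding y_def using assms by (intro lincomb_scalar_prod_left) auto
  also have "\<dots> = (\<Sum>i\<in>I. c i * (\<Sum>j\<in>I. c j * (x i \<bullet> (M *\<^sub>v x j))))"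
  proof (rule sum.cong[OF refl])
    fix i assume i: "i \<in> I"
    have "M *\<^sub>v y = vec n (\<lambda>l. \<Sum>j\<in>I. c j * (M *\<^sub>v x j) $ l)"
      unfolding y_def using x M by (rule mult_mat_vec_lincomb)
    then have "x i \<bullet> (M *\<^sub>v y) = vec n (\<lambda>l. \<Sum>j\<in>I. c j * (M *\<^sub>v x j) $ l) \<bullet> x i"
      using x[OF i] by (simp add: comm_scalar_prod[of _ n])
    also have "\<dots> = (\<Sum>j\<in>I. c j * ((M *\<^sub>v x j) \<bullet> x i))"
      using x i M by (intro lincomb_scalar_prod_left) auto
    also have "\<dots> = (\<Sum>j\<in>I. c j * (x i \<bullet> (M *\<^sub>v x j)))"
      using x i M by (intro sum.cong refl) (simp add: comm_scalar_prod[of _ n])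
    finally show "c i * (x i \<bullet> (M *\<^sub>v y)) = c i * (\<Sum>j\<in>I. c j * (x i \<bullet> (M *\<^sub>v x j)))" by simp
  qed
  finally show ?thesis by (simp add: sum_distrib_left mult.assoc)
qed

lemma homogeneous_system_nontrivial_solution:
  fixes a :: "'i \<Rightarrow> 'j \<Rightarrow> 'a :: field"
  assumes "finite I" "finite J" "card I < card J"
  shows "\<exists>c. (\<exists>j\<in>J. c j \<noteq> 0) \<and> (\<forall>i\<in>I. (\<Sum>j\<in>J. a i j * c j) = 0)"
  using assms
proof (induction I arbitrary: J a rule: finite_induct)
  case empty
  then obtain j where "j \<in> J" by fastforce
  then show ?case by (intro exI[of _ "\<lambda>_. 1"]) auto
next
  case (insert i0 I)
  show ?case
  proof (cases "\<forall>j\<in>J. a i0 j = 0")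
    case True
    have "card I < card J" using insert by simp
    from insert.IH[OF insert.prems(1) this, of a] obtain c where
      "\<exists>j\<in>J. c j \<noteq> 0" "\<forall>i\<in>I. (\<Sum>j\<in>J. a i j * c j) = 0" by auto
    with True show ?thesis by (intro exI[of _ c]) auto
  next
    case False
    then obtain j0 where j0: "j0 \<in> J" "a i0 j0 \<noteq> 0" by auto
    define J' where "J' = J - {j0}"
    define a' where "a' i j = a i j - a i j0 * a i0 j / a i0 j0" for i j
    \<comment> \<open>eliminate the unknown \<open>c j0\<close> using equation \<open>i0\<close>\<close>
    have "finite J'" "card I < card J'"
      using insert j0 by (simp_all add: J'_def)
    from insert.IH[OF this, of a'] obtain c' where
      c': "\<exists>j\<in>J'. c' j \<noteq> 0" "\<forall>i\<in>I. (\<Sum>j\<in>J'. a' i j * c' j) = 0" by blast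
    define c where "c j = (if j = j0 then - (\<Sum>j\<in>J'. a i0 j * c' j) / a i0 j0 else c' j)" for j
    have split_J: "(\<Sum>j\<in>J. a i j * c j) = a i j0 * c j0 + (\<Sum>j\<in>J'. a i j * c' j)" for i
    proof -
      have "(\<Sum>j\<in>J'. a i j * c j) = (\<Sum>j\<in>J'. a i j * c' j)"
        by (rule sum.cong) (auto simp: J'_def c_def)
      then show ?thesis
        using j0 insert.prems by (simp add: J'_def sum.remove)
    qed
    show ?thesis
    proof (intro exI[of _ c] conjI ballI)
      from c' show "\<exists>j\<in>J. c j \<noteq> 0" by (auto simp: c_def J'_def)
    next
      fix i assume "i \<in> insert i0 I"
      then consider "i = i0" | "i \<in> I" by auto
      then show "(\<Sum>j\<in>J. a i j * c j) = 0"
      proof cases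
        case 1
        then show ?thesis using j0 by (simp add: split_J, simp add: c_def)
      next
        case 2
        have "(\<Sum>j\<in>J. a i j * c j) = (\<Sum>j\<in>J'. a' i j * c' j)"
          unfolding split_J unfolding a'_def c_def using j0
          by (simp add: sum_distrib_left sum_divide_distrib algebra_simps sum_subtractf)
        with c' 2 show ?thesis by simp
      qed
    qed
  qed
qed

section \<open>Spectral decomposition of real symmetric matrices\<close>

lemma symmetric_mat_complex_eigenvalue_real:
  fixes A :: "real mat"
  assumes A: "A \<in> carrier_mat n n" and sym: "A\<^sup>T = A"
    and z: "z \<in> carrier_vec n" "z \<noteq> 0\<^sub>v n" "map_mat complex_of_real A *\<^sub>v z = a \<cdot>\<^sub>v z"
  shows "a \<in> \<real>"
proof -
  have sym_entry: "A $$ (i, j) = A $$ (j, i)" if "i < n" "j < n" for i j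
    using arg_cong[OF sym, of "\<lambda>M. M $$ (i, j)"] A that by simp
  define N where "N = (\<Sum>i<n. cnj (z $ i) * z $ i)"
  define s where "s = (\<Sum>i<n. cnj (z $ i) * (map_mat complex_of_real A *\<^sub>v z) $ i)"
  \<comment> \<open>\<open>s\<close> is the Hermitian form \<open>z\<^sup>* A z\<close>: it equals \<open>a N\<close> and is real by symmetry\<close>
  have s_eigen: "s = a * N"
    unfolding s_def N_def z(3) using z(1) by (simp add: sum_distrib_left algebra_simps)
  have s_entries: "s = (\<Sum>i<n. \<Sum>j<n. cnj (z $ i) * of_real (A $$ (i, j)) * z $ j)"
    using A z(1) by (simp add: s_def scalar_prod_def lessThan_atLeast0 sum_distrib_left algebra_simps)
  have "cnj s = (\<Sum>i<n. \<Sum>j<n. z $ i * of_real (A $$ (i, j)) * cnj (z $ j))"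
    unfolding s_entries by (simp add: cnj_sum)
  also have "\<dots> = (\<Sum>j<n. \<Sum>i<n. z $ i * of_real (A $$ (i, j)) * cnj (z $ j))"
    by (rule sum.swap)
  also have "\<dots> = s"
    unfolding s_entries by (intro sum.cong refl) (auto simp: sym_entry algebra_simps)
  finally have s_real: "cnj s = s" .
  have N_real: "N = of_real (\<Sum>i<n. (cmod (z $ i))\<^sup>2)"
    unfolding N_def of_real_sum
    by (intro sum.cong refl) (simp add: complex_norm_square mult.commute del: of_real_power)
  have "N \<noteq> 0"
  proof
    assume "N = 0"
    then have "\<forall>i\<in>{..<n}. (cmod (z $ i))\<^sup>2 = 0"
      unfolding N_real of_real_eq_0_iff by (subst (asm) sum_nonneg_eq_0_iff) auto
    then have "z = 0\<^sub>v n" using z(1) by (intro eq_vecI) auto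
    with z(2) show False by simp
  qed
  moreover have "cnj a * N = a * N"
    using s_real unfolding s_eigen N_real by simp
  ultimately show ?thesis by (simp add: Reals_cnj_iff)
qed

lemma symmetric_mat_real_eigenvector:
  fixes A :: "real mat"
  assumes A: "A \<in> carrier_mat n n" and sym: "A\<^sup>T = A" and "n > 0"
  obtains e v where "v \<in> carrier_vec n" "v \<noteq> 0\<^sub>v n" "A *\<^sub>v v = e \<cdot>\<^sub>v v"
proof -
  let ?Ac = "map_mat complex_of_real A"
  have Ac: "?Ac \<in> carrier_mat n n" using A by simp
  obtain as where as: "char_poly ?Ac = (\<Prod>a\<leftarrow>as. [:- a, 1:])" "length as = n"
    using char_poly_factorized[OF Ac] by blast
  with \<open>n > 0\<close> obtain a where "poly (char_poly ?Ac) a = 0"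
    by (cases as) auto
  then obtain z where "z \<in> carrier_vec n" "z \<noteq> 0\<^sub>v n" "?Ac *\<^sub>v z = a \<cdot>\<^sub>v z"
    using eigenvalue_root_char_poly[OF Ac] Ac unfolding eigenvalue_def eigenvector_def by auto
  then have "a = of_real (Re a)"
    using symmetric_mat_complex_eigenvalue_real[OF A sym] by (simp add: of_real_Re)
  have "poly (char_poly A) (Re a) = 0"
  proof -
    have "poly (map_poly complex_of_real (char_poly A)) (of_real (Re a)) = 0"
      using \<open>poly (char_poly ?Ac) a = 0\<close> \<open>a = of_real (Re a)\<close> of_real_hom.char_poly_hom[OF A] by metis
    then show ?thesis by (simp add: of_real_hom.poly_map_poly)
  qed
  then have "eigenvalue A (Re a)" using eigenvalue_root_char_poly[OF A] by simp
  with A that show ?thesis unfolding eigenvalue_def eigenvector_def by auto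
qed

lemma minus_eq_zero_vec_iff:
  fixes v w :: "'a :: ab_group_add vec"
  assumes "v \<in> carrier_vec n" "w \<in> carrier_vec n"
  shows "v - w = 0\<^sub>v n \<longleftrightarrow> v = w"
proof
  assume "v - w = 0\<^sub>v n"
  have "v $ i - w $ i = (v - w) $ i" if "i < n" for i
    using assms that by simp
  then have "v $ i = w $ i" if "i < n" for i
    using \<open>v - w = 0\<^sub>v n\<close> that by simp
  with assms show "v = w" by (intro eq_vecI) auto
qed (use assms in simp)

definition householder_mat :: "real vec \<Rightarrow> real mat" where
  "householder_mat w = mat (dim_vec w) (dim_vec w)
     (\<lambda>(i, j). (if i = j then 1 else 0) - 2 * w $ i * w $ j / (w \<bullet> w))"

lemma householder_mat_dim [simp]:
  "dim_row (householder_mat w) = dim_vec w" "dim_col (householder_mat w) = dim_vec w"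
  by (simp_all add: householder_mat_def)

lemma householder_mat_carrier [simp]: "w \<in> carrier_vec n \<Longrightarrow> householder_mat w \<in> carrier_mat n n"
  by (simp add: householder_mat_def)

lemma householder_mat_symmetric: "(householder_mat w)\<^sup>T = householder_mat w"
  by (rule eq_matI) (auto simp: householder_mat_def)

lemma householder_mat_mult_vec:
  assumes w: "w \<in> carrier_vec n" and x: "x \<in> carrier_vec n"
  shows "householder_mat w *\<^sub>v x = x - (2 * (w \<bullet> x) / (w \<bullet> w)) \<cdot>\<^sub>v w"
proof (rule eq_vecI)
  fix i assume "i < dim_vec (x - (2 * (w \<bullet> x) / (w \<bullet> w)) \<cdot>\<^sub>v w)"
  with w have i: "i < n" by simp
  have "(householder_mat w *\<^sub>v x) $ i
      = (\<Sum>j<n. (if i = j then x $ j else 0) - 2 * w $ i / (w \<bullet> w) * (w $ j * x $ j))"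
    using w x i by (simp add: householder_mat_def scalar_prod_def lessThan_atLeast0 algebra_simps)
      (intro sum.cong refl, simp)
  also have "\<dots> = x $ i - 2 * w $ i / (w \<bullet> w) * (\<Sum>j<n. w $ j * x $ j)"
    using i by (simp only: sum_subtractf sum_distrib_left[symmetric]) simp
  also have "\<dots> = x $ i - 2 * w $ i / (w \<bullet> w) * (w \<bullet> x)"
    using x by (simp add: scalar_prod_def lessThan_atLeast0)
  finally show "(householder_mat w *\<^sub>v x) $ i = (x - (2 * (w \<bullet> x) / (w \<bullet> w)) \<cdot>\<^sub>v w) $ i"
    using w x i by simp
qed (use w x in simp)

lemma householder_mat_involution:
  assumes w: "w \<in> carrier_vec n" and "w \<noteq> 0\<^sub>v n"
  shows "householder_mat w * householder_mat w = 1\<^sub>m n"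
proof -
  let ?H = "householder_mat w"
  have "w \<bullet> w \<noteq> 0"
    using assms conjugate_square_greater_0_vec[OF w] by simp
  then have HH: "?H *\<^sub>v (?H *\<^sub>v x) = x" if x: "x \<in> carrier_vec n" for x
    using w x by (intro eq_vecI) (simp_all add: householder_mat_mult_vec scalar_prod_minus_distrib
        scalar_prod_smult_distrib field_simps)
  show ?thesis
  proof (rule eq_matI)
    fix i j assume "i < dim_row (1\<^sub>m n :: real mat)" "j < dim_col (1\<^sub>m n :: real mat)"
    then have i: "i < n" and j: "j < n" by auto
    have col: "col ?H j = ?H *\<^sub>v unit_vec n j"
      using w j by (intro eq_vecI) (auto simp: scalar_prod_right_unit)
    have "(?H * ?H) $$ (i, j) = (?H *\<^sub>v col ?H j) $ i"
      using w i j by (simp add: col_mult2[of _ n n _ n, symmetric])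
    also have "\<dots> = (1\<^sub>m n :: real mat) $$ (i, j)"
      using i j by (simp add: col HH)
    finally show "(?H * ?H) $$ (i, j) = (1\<^sub>m n :: real mat) $$ (i, j)" .
  qed (use w in auto)
qed

lemma householder_mat_swaps_unit_vectors:
  assumes e: "e \<in> carrier_vec n" "e \<bullet> e = 1" and u: "u \<in> carrier_vec n" "u \<bullet> u = 1"
    and "e \<noteq> u"
  shows "householder_mat (e - u) *\<^sub>v e = u"
proof -
  have "(e - u) \<bullet> (e - u) \<noteq> 0"
  proof
    assume "(e - u) \<bullet> (e - u) = 0"
    then have "e - u = 0\<^sub>v n"
      using e u conjugate_square_eq_0_vec[of "e - u" n] by simp
    with e u \<open>e \<noteq> u\<close> show False by (simp add: minus_eq_zero_vec_iff)
  qed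
  moreover have "(e - u) \<bullet> (e - u) = 2 * ((e - u) \<bullet> e)"
    using e u comm_scalar_prod[OF e(1) u(1)]
    by (simp add: scalar_prod_minus_distrib minus_scalar_prod_distrib)
  ultimately show ?thesis
    using e u by (intro eq_vecI) (simp_all add: householder_mat_mult_vec[of _ n])
qed

lemma quadratic_form_block_diag:
  assumes A: "A \<in> carrier_mat n1 n1" and D: "D \<in> carrier_mat n2 n2"
    and a: "a \<in> carrier_vec n1" and d: "d \<in> carrier_vec n2"
  shows "(a @\<^sub>v d) \<bullet> (four_block_mat A (0\<^sub>m n1 n2) (0\<^sub>m n2 n1) D *\<^sub>v (a @\<^sub>v d))
    = a \<bullet> (A *\<^sub>v a) + d \<bullet> (D *\<^sub>v d)"
proof -
  have "four_block_mat A (0\<^sub>m n1 n2) (0\<^sub>m n2 n1) D *\<^sub>v (a @\<^sub>v d) = (A *\<^sub>v a) @\<^sub>v (D *\<^sub>v d)"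
    by (rule mult_mat_vec_split[OF A D a d])
  then show ?thesis
    using assms by (simp add: scalar_prod_append[of a n1 d n2])
qed

lemma symmetric_mat_unit_eigenvector:
  fixes A :: "real mat"
  assumes A: "A \<in> carrier_mat n n" and sym: "A\<^sup>T = A" and "n > 0"
  obtains e u where "u \<in> carrier_vec n" "u \<bullet> u = 1" "A *\<^sub>v u = e \<cdot>\<^sub>v u" "u \<noteq> unit_vec n 0"
proof -
  obtain e v where v: "v \<in> carrier_vec n" "v \<noteq> 0\<^sub>v n" "A *\<^sub>v v = e \<cdot>\<^sub>v v"
    using symmetric_mat_real_eigenvector[OF assms] by blast
  have "v \<bullet> v > 0" using v conjugate_square_greater_0_vec[OF v(1)] by simp
  \<comment> \<open>the sign makes \<open>u $ 0 \<le> 0\<close>, which keeps \<open>u\<close> away from \<open>unit_vec n 0\<close>\<close>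
  define u where "u = ((if v $ 0 > 0 then - 1 else 1) / sqrt (v \<bullet> v)) \<cdot>\<^sub>v v"
  have "u \<in> carrier_vec n" "u \<bullet> u = 1" "A *\<^sub>v u = e \<cdot>\<^sub>v u" "u $ 0 \<le> 0"
    using v \<open>v \<bullet> v > 0\<close> A \<open>n > 0\<close>
    by (auto simp: u_def scalar_prod_smult_distrib smult_scalar_prod_distrib mult_mat_vec
        smult_smult_assoc mult.commute real_sqrt_mult[symmetric] mult_le_0_iff divide_nonpos_pos)
  moreover have "u \<noteq> unit_vec n 0"
    using \<open>u $ 0 \<le> 0\<close> \<open>n > 0\<close> by auto
  ultimately show ?thesis using that by blast
qed

lemma symmetric_mat_block_from_eigenvector:
  fixes B :: "'a :: comm_ring_1 mat"
  assumes B: "B \<in> carrier_mat (Suc m) (Suc m)" and sym: "B\<^sup>T = B"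
    and eigen: "B *\<^sub>v unit_vec (Suc m) 0 = e \<cdot>\<^sub>v unit_vec (Suc m) 0"
  obtains B' where "B' \<in> carrier_mat m m" "B'\<^sup>T = B'"
    "B = four_block_mat (mat 1 1 (\<lambda>_. e)) (0\<^sub>m 1 m) (0\<^sub>m m 1) B'"
proof
  let ?B' = "mat m m (\<lambda>(i, j). B $$ (Suc i, Suc j))"
  have swap: "B $$ (j, i) = B $$ (i, j)" if "i < Suc m" "j < Suc m" for i j
    using arg_cong[OF sym, of "\<lambda>M. M $$ (i, j)"] B that by simp
  have col: "B $$ (i, 0) = (if i = 0 then e else 0)" if "i < Suc m" for i
  proof -
    have "B $$ (i, 0) = (B *\<^sub>v unit_vec (Suc m) 0) $ i"
      using B that by (simp add: scalar_prod_right_unit)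
    with eigen that show ?thesis by simp
  qed
  show "?B' \<in> carrier_mat m m" by simp
  show "?B'\<^sup>T = ?B'"
    using swap by (intro eq_matI) auto
  show "B = four_block_mat (mat 1 1 (\<lambda>_. e)) (0\<^sub>m 1 m) (0\<^sub>m m 1) ?B'"
  proof (rule eq_matI)
    fix i j assume "i < dim_row (four_block_mat (mat 1 1 (\<lambda>_. e)) (0\<^sub>m 1 m) (0\<^sub>m m 1) ?B')"
      "j < dim_col (four_block_mat (mat 1 1 (\<lambda>_. e)) (0\<^sub>m 1 m) (0\<^sub>m m 1) ?B')"
    then have "i < Suc m" "j < Suc m" by simp_all
    then show "B $$ (i, j) = four_block_mat (mat 1 1 (\<lambda>_. e)) (0\<^sub>m 1 m) (0\<^sub>m m 1) ?B' $$ (i, j)"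
      using col swap[of 0 j] by (cases i; cases j) simp_all
  qed (use B in simp_all)
qed

lemma symmetric_mat_deflate:
  fixes A :: "real mat"
  assumes A: "A \<in> carrier_mat (Suc m) (Suc m)" and sym: "A\<^sup>T = A"
  obtains e H A' where "H \<in> carrier_mat (Suc m) (Suc m)" "H\<^sup>T = H" "H * H = 1\<^sub>m (Suc m)"
    "A' \<in> carrier_mat m m" "A'\<^sup>T = A'"
    "H * A * H = four_block_mat (mat 1 1 (\<lambda>_. e)) (0\<^sub>m 1 m) (0\<^sub>m m 1) A'"
proof -
  let ?n = "Suc m"
  let ?e0 = "unit_vec ?n 0 :: real vec"
  obtain e u where u: "u \<in> carrier_vec ?n" "u \<bullet> u = 1" "A *\<^sub>v u = e \<cdot>\<^sub>v u" "u \<noteq> ?e0"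
    using symmetric_mat_unit_eigenvector[OF A sym] by blast
  define H where "H = householder_mat (?e0 - u)"
  have H: "H \<in> carrier_mat ?n ?n" "H\<^sup>T = H" "H * H = 1\<^sub>m ?n" "H *\<^sub>v ?e0 = u"
    using u householder_mat_swaps_unit_vectors[of ?e0 ?n u]
    by (simp_all add: H_def householder_mat_symmetric householder_mat_involution minus_eq_zero_vec_iff)
  have "(H * A * H)\<^sup>T = H\<^sup>T * (A\<^sup>T * H\<^sup>T)"
    using A H by (simp add: transpose_mult[of _ ?n ?n _ ?n])
  also have "\<dots> = H * A * H"
    using A H sym by (simp add: assoc_mult_mat[of _ ?n ?n _ ?n _ ?n])
  finally have sym': "(H * A * H)\<^sup>T = H * A * H" .
  have "H *\<^sub>v u = ?e0"
    using H by (simp flip: assoc_mult_mat_vec[of H ?n ?n H ?n] H(4))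
  then have "(H * A * H) *\<^sub>v ?e0 = e \<cdot>\<^sub>v ?e0"
    using A H u by (simp add: assoc_mult_mat_vec[of _ ?n ?n _ ?n] mult_mat_vec)
  then obtain A' where "A' \<in> carrier_mat m m" "A'\<^sup>T = A'"
    "H * A * H = four_block_mat (mat 1 1 (\<lambda>_. e)) (0\<^sub>m 1 m) (0\<^sub>m m 1) A'"
    using symmetric_mat_block_from_eigenvector[of "H * A * H" m e] A H sym' by auto
  with H that show ?thesis by blast
qed

lemma quadratic_form_congruence:
  fixes H B :: "'a :: comm_ring mat"
  assumes H: "H \<in> carrier_mat n n" and B: "B \<in> carrier_mat n n" and y: "y \<in> carrier_vec n"
  shows "y \<bullet> ((H\<^sup>T * B * H) *\<^sub>v y) = (H *\<^sub>v y) \<bullet> (B *\<^sub>v (H *\<^sub>v y))"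
proof -
  have "(H\<^sup>T * B * H) *\<^sub>v y = H\<^sup>T *\<^sub>v (B *\<^sub>v (H *\<^sub>v y))"
    using assms by (simp add: assoc_mult_mat_vec[of _ n n _ n])
  then show ?thesis
    using transpose_vec_mult_scalar[OF H, of y "B *\<^sub>v (H *\<^sub>v y)"] assms
    by (simp add: comm_scalar_prod[of _ n])
qed

lemma scalar_prod_zero_append:
  assumes "q \<in> carrier_vec m" "z \<in> carrier_vec (n + m)"
  shows "(0\<^sub>v n @\<^sub>v q) \<bullet> z = q \<bullet> vec_last z m"
proof -
  have "(0\<^sub>v n @\<^sub>v q) \<bullet> z = (0\<^sub>v n @\<^sub>v q) \<bullet> (vec_first z n @\<^sub>v vec_last z m)"
    by (simp only: vec_first_last_append[OF assms(2)])
  also have "\<dots> = 0\<^sub>v n \<bullet> vec_first z n + q \<bullet> vec_last z m"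
    using assms by (intro scalar_prod_append[of _ n _ m]) auto
  finally show ?thesis by simp
qed

lemma symmetric_mat_diagonal_form:
  fixes A :: "real mat"
  assumes "A \<in> carrier_mat n n" "A\<^sup>T = A"
  shows "\<exists>d p. char_poly A = (\<Prod>i<n. [:- d i, 1:]) \<and> (\<forall>i<n. p i \<in> carrier_vec n) \<and>
    (\<forall>y\<in>carrier_vec n. y \<bullet> (A *\<^sub>v y) = (\<Sum>i<n. d i * (p i \<bullet> y)\<^sup>2))"
  using assms
proof (induction n arbitrary: A)
  case 0
  then have "char_poly A = 1"
    using char_poly_upper_triangular[of A 0] by (simp add: upper_triangular_def diag_mat_def)
  moreover have "y \<bullet> (A *\<^sub>v y) = 0" if "y \<in> carrier_vec 0" for y
    using that 0 by (simp add: scalar_prod_def)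
  ultimately show ?case by auto
next
  case (Suc m A)
  let ?n = "Suc m"
  let ?e0 = "unit_vec ?n 0 :: real vec"
  obtain e H A' where H: "H \<in> carrier_mat ?n ?n" "H\<^sup>T = H" "H * H = 1\<^sub>m ?n"
    and A': "A' \<in> carrier_mat m m" "A'\<^sup>T = A'"
    and HAH: "H * A * H = four_block_mat (mat 1 1 (\<lambda>_. e)) (0\<^sub>m 1 m) (0\<^sub>m m 1) A'"
    using symmetric_mat_deflate[OF Suc.prems] by blast
  obtain d' p' where d': "char_poly A' = (\<Prod>i<m. [:- d' i, 1:])"
    and p': "\<forall>i<m. p' i \<in> carrier_vec m"
    and form': "\<forall>y\<in>carrier_vec m. y \<bullet> (A' *\<^sub>v y) = (\<Sum>i<m. d' i * (p' i \<bullet> y)\<^sup>2)"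
    using Suc.IH[OF A'] by blast
  define B where "B = four_block_mat (mat 1 1 (\<lambda>_. e)) (0\<^sub>m 1 m) (0\<^sub>m m 1) A'"
  define d where "d = case_nat e d'"
  define p where "p = case_nat (H *\<^sub>v ?e0) (\<lambda>i. H *\<^sub>v (0\<^sub>v 1 @\<^sub>v p' i))"
  have A: "A \<in> carrier_mat ?n ?n" using Suc.prems by simp
  have B: "B \<in> carrier_mat ?n ?n"
    using four_block_carrier_mat[of "mat 1 1 (\<lambda>_. e)" 1 1 A' m m] A' by (simp add: B_def)
  have "H * B * H = H * (H * A * H) * H"
    by (simp only: B_def HAH)
  also have "\<dots> = (H * H) * A * (H * H)"
    using A H(1) by (simp add: assoc_mult_mat[of _ ?n ?n _ ?n _ ?n])
  finally have A_eq: "A = H\<^sup>T * B * H"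
    using A H by simp
  have H_adjoint: "x \<bullet> (H *\<^sub>v z) = (H *\<^sub>v x) \<bullet> z" if "x \<in> carrier_vec ?n" "z \<in> carrier_vec ?n" for x z
    using transpose_vec_mult_scalar[OF H(1) that(2,1)] H(2) by simp
  have pad: "0\<^sub>v 1 @\<^sub>v p' i \<in> carrier_vec ?n" if "i < m" for i
    using append_carrier_vec[OF zero_carrier_vec, of "p' i" m 1] p' that by simp
  then have p: "\<forall>i<?n. p i \<in> carrier_vec ?n"
    using H by (auto simp: p_def split: nat.split)
  have "similar_mat_wit A B H H"
    using A B H A_eq by (intro similar_mat_witI[of _ _ ?n]) auto
  then have "char_poly A = char_poly B"
    by (intro char_poly_similar) (auto simp: similar_mat_def)
  also have "\<dots> = [:- e, 1:] * char_poly A'"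
    unfolding B_def using A'
    by (subst char_poly_four_block_zeros_col) (auto simp: char_poly_defs det_def sign_def)
  also have "\<dots> = (\<Prod>i<?n. [:- d i, 1:])"
    by (simp only: prod.lessThan_Suc_shift) (simp add: d' d_def)
  finally have "char_poly A = (\<Prod>i<?n. [:- d i, 1:])" .
  moreover have "y \<bullet> (A *\<^sub>v y) = (\<Sum>i<?n. d i * (p i \<bullet> y)\<^sup>2)" if y: "y \<in> carrier_vec ?n" for y
  proof -
    define z where "z = H *\<^sub>v y"
    have z: "z \<in> carrier_vec (1 + m)" using H y by (simp add: z_def)
    let ?a = "vec_first z 1" and ?z' = "vec_last z m"
    have "y \<bullet> (A *\<^sub>v y) = (?a @\<^sub>v ?z') \<bullet> (B *\<^sub>v (?a @\<^sub>v ?z'))"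
      using quadratic_form_congruence[OF H(1) B y] z by (simp add: A_eq z_def)
    also have "\<dots> = ?a \<bullet> (mat 1 1 (\<lambda>_. e) *\<^sub>v ?a) + ?z' \<bullet> (A' *\<^sub>v ?z')"
      unfolding B_def by (rule quadratic_form_block_diag[OF _ A'(1)]) auto
    also have "?a \<bullet> (mat 1 1 (\<lambda>_. e) *\<^sub>v ?a) = d 0 * (p 0 \<bullet> y)\<^sup>2"
    proof -
      have "z $ 0 = p 0 \<bullet> y"
        using y H by (simp add: p_def z_def H_adjoint[symmetric] scalar_prod_right_unit)
      then show ?thesis
        by (simp add: scalar_prod_def vec_first_def power2_eq_square d_def)
    qed
    also have "?z' \<bullet> (A' *\<^sub>v ?z') = (\<Sum>i<m. d (Suc i) * (p (Suc i) \<bullet> y)\<^sup>2)"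
    proof -
      have "p' i \<bullet> ?z' = p (Suc i) \<bullet> y" if "i < m" for i
        using scalar_prod_zero_append[of "p' i" m z 1] y H z p' pad[OF that] that
        by (simp add: p_def z_def H_adjoint)
      then show ?thesis
        using form' by (simp add: d_def)
    qed
    also have "d 0 * (p 0 \<bullet> y)\<^sup>2 + (\<Sum>i<m. d (Suc i) * (p (Suc i) \<bullet> y)\<^sup>2) = (\<Sum>i<?n. d i * (p i \<bullet> y)\<^sup>2)"
      by (simp only: sum.lessThan_Suc_shift)
    finally show ?thesis .
  qed
  ultimately show ?case using p by blast
qed

section \<open>Counting positive eigenvalues\<close>

lemma order_prod_linear_factors:
  fixes d :: "nat \<Rightarrow> 'a :: idom"
  shows "order a (\<Prod>i<n. [:- d i, 1:]) = card {i. i < n \<and> d i = a}"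
proof (induction n)
  case 0
  then show ?case by (simp add: order_0I)
next
  case (Suc n)
  have "(\<Prod>i<Suc n. [:- d i, 1:]) \<noteq> 0"
    by (subst prod_zero_iff) auto
  then have "order a (\<Prod>i<Suc n. [:- d i, 1:]) = order a (\<Prod>i<n. [:- d i, 1:]) + order a [:- d n, 1:]"
    unfolding prod.lessThan_Suc by (rule order_mult)
  moreover have "{i. i < Suc n \<and> d i = a} = {i. i < n \<and> d i = a} \<union> (if d n = a then {n} else {})"
    by (auto simp: less_Suc_eq)
  ultimately show ?case using Suc by (simp add: order_linear')
qed

lemma num_pos_eigenvalues_linear_factors:
  fixes d :: "nat \<Rightarrow> real"
  assumes "char_poly A = (\<Prod>i<n. [:- d i, 1:])"
  shows "num_pos_eigenvalues A = card {i. i < n \<and> d i > 0}"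
proof -
  let ?P = "{i. i < n \<and> d i > 0}"
  have roots: "{a. a > 0 \<and> poly (char_poly A) a = 0} = d ` ?P"
    unfolding assms by (auto simp: poly_prod prod_zero_iff)
  have "card ?P = (\<Sum>a\<in>d ` ?P. card {i \<in> ?P. d i = a})"
    using card_eq_sum sum.image_gen[of ?P "\<lambda>_. 1 :: nat" d] by simp
  also have "\<dots> = (\<Sum>a\<in>d ` ?P. order a (char_poly A))"
  proof (rule sum.cong[OF refl])
    fix a assume "a \<in> d ` ?P"
    then have "{i \<in> ?P. d i = a} = {i. i < n \<and> d i = a}" by auto
    then show "card {i \<in> ?P. d i = a} = order a (char_poly A)"
      by (simp add: assms order_prod_linear_factors)
  qed
  finally show ?thesis unfolding num_pos_eigenvalues_def roots by simp
qed

lemma num_pos_eigenvalues_ge_if_form_pos: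
  fixes M :: "real mat" and x :: "nat \<Rightarrow> real vec"
  assumes M: "M \<in> carrier_mat n n" "M\<^sup>T = M" and x: "\<And>i. i < k \<Longrightarrow> x i \<in> carrier_vec n"
    and pos: "\<And>c. \<exists>i<k. c i \<noteq> 0 \<Longrightarrow>
      vec n (\<lambda>l. \<Sum>i<k. c i * x i $ l) \<bullet> (M *\<^sub>v vec n (\<lambda>l. \<Sum>i<k. c i * x i $ l)) > 0"
  shows "k \<le> num_pos_eigenvalues M"
proof (rule ccontr)
  obtain d p where char_poly: "char_poly M = (\<Prod>i<n. [:- d i, 1:])"
    and p: "\<forall>i<n. p i \<in> carrier_vec n"
    and form: "\<forall>y\<in>carrier_vec n. y \<bullet> (M *\<^sub>v y) = (\<Sum>i<n. d i * (p i \<bullet> y)\<^sup>2)"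
    using symmetric_mat_diagonal_form[OF M] by blast
  define P where "P = {i. i < n \<and> d i > 0}"
  assume "\<not> k \<le> num_pos_eigenvalues M"
  then have "card P < card {..<k}"
    by (simp add: P_def num_pos_eigenvalues_linear_factors[OF char_poly])
  \<comment> \<open>fewer positive directions than vectors: some combination is orthogonal to all of them\<close>
  then obtain c where c: "\<exists>j\<in>{..<k}. c j \<noteq> 0" "\<forall>i\<in>P. (\<Sum>j<k. (p i \<bullet> x j) * c j) = 0"
    using homogeneous_system_nontrivial_solution[of P "{..<k}" "\<lambda>i j. p i \<bullet> x j"]
    by (auto simp: P_def)
  define y where "y = vec n (\<lambda>l. \<Sum>j<k. c j * x j $ l)"
  have y: "y \<in> carrier_vec n" by (simp add: y_def)
  have "p i \<bullet> y = 0" if "i \<in> P" for i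
  proof -
    have p_i: "p i \<in> carrier_vec n" using p that by (simp add: P_def)
    have "p i \<bullet> y = (\<Sum>j<k. c j * (x j \<bullet> p i))"
      unfolding y_def using x p_i by (subst comm_scalar_prod[of _ n]) (auto intro: lincomb_scalar_prod_left)
    also have "\<dots> = (\<Sum>j<k. (p i \<bullet> x j) * c j)"
      using x p_i by (intro sum.cong refl) (simp add: comm_scalar_prod[of _ n])
    finally show ?thesis using c(2) that by simp
  qed
  then have "d i * (p i \<bullet> y)\<^sup>2 \<le> 0" if "i < n" for i
    using that by (cases "d i > 0") (auto simp: P_def not_less mult_nonpos_nonneg)
  then have "(\<Sum>i<n. d i * (p i \<bullet> y)\<^sup>2) \<le> 0"
    by (intro sum_nonpos) simp
  then have "y \<bullet> (M *\<^sub>v y) \<le> 0"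
    using form y by simp
  moreover have "y \<bullet> (M *\<^sub>v y) > 0"
    unfolding y_def using c(1) by (intro pos) auto
  ultimately show False by simp
qed

section \<open>Generalized modularity matrices\<close>

lemma gen_modularity_matrix_symmetric:
  assumes "gen_modularity_matrix n M"
  shows "M \<in> carrier_mat n n" "M\<^sup>T = M"
proof -
  from assms obtain A \<Delta> v \<sigma> where A: "adjacency_matrix n A" and \<Delta>: "\<Delta> \<in> carrier_mat n n" "diagonal_mat \<Delta>"
    and v: "v \<in> carrier_vec n" and M: "M = A + \<Delta> - \<sigma> \<cdot>\<^sub>m outer_prod v v"
    unfolding gen_modularity_matrix_def by blast
  have A_carrier: "A \<in> carrier_mat n n" and "A\<^sup>T = A"
    using A by (auto simp: adjacency_matrix_def sym_mat_def)
  have A_sym: "A $$ (j, i) = A $$ (i, j)" if "i < n" "j < n" for i j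
    using arg_cong[OF \<open>A\<^sup>T = A\<close>, of "\<lambda>B. B $$ (i, j)"] A_carrier that by simp
  have "outer_prod v v \<in> carrier_mat n n"
    using v by (simp add: outer_prod_def)
  then show M_carrier: "M \<in> carrier_mat n n"
    unfolding M by (intro minus_carrier_mat smult_carrier_mat)
  show "M\<^sup>T = M"
  proof (rule eq_matI)
    fix i j assume "i < dim_row M" "j < dim_col M"
    then have ij: "i < n" "j < n" using M_carrier by auto
    have "\<Delta> $$ (j, i) = \<Delta> $$ (i, j)"
      using \<Delta> ij by (cases "i = j") (auto simp: diagonal_mat_def)
    then show "M\<^sup>T $$ (i, j) = M $$ (i, j)"
      using ij A_carrier \<Delta> v by (simp add: M A_sym outer_prod_def mult.commute)
  qed (use M_carrier in auto)
qed

lemma Qmod_symmetric: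
  assumes "M \<in> carrier_mat n n" "M\<^sup>T = M"
  shows "Qmod M S T = Qmod M T S"
proof -
  have "charvec n S \<bullet> (M *\<^sub>v charvec n T) = (M\<^sup>T *\<^sub>v charvec n S) \<bullet> charvec n T"
    using assms(1) by (simp add: transpose_vec_mult_scalar[of _ n n] charvec_def)
  also have "\<dots> = charvec n T \<bullet> (M *\<^sub>v charvec n S)"
    using assms by (simp add: comm_scalar_prod[of _ n] charvec_def)
  finally show ?thesis
    using assms(1) by (simp add: Qmod_def)
qed

theorem theorem6p2:
  fixes n k :: nat and M :: "real mat" and S :: "nat \<Rightarrow> nat set" and \<alpha> :: "nat \<Rightarrow> real"
  assumes "gen_modularity_matrix n M"
    and "k \<ge> 1"
    and "\<forall>i<k. S i \<subseteq> {0..<n} \<and> S i \<noteq> {}"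
    and "\<forall>i<k. \<forall>j<k. i \<noteq> j \<longrightarrow> S i \<inter> S j = {}"
    and "\<forall>i<k. Qmod M (S i) (S i) > 0"
    and "\<forall>i<k. \<forall>j<k. i \<noteq> j \<longrightarrow> Qmod M (S i) (S j) < 0"
    and "\<forall>i<k. \<alpha> i > 0"
    and "\<forall>i<k. \<alpha> i * Qmod M (S i) (S i) > (\<Sum>j\<in>{0..<k} - {i}. \<alpha> j * \<bar>Qmod M (S i) (S j)\<bar>)"
  shows "num_pos_eigenvalues M \<ge> k"
proof -
  \<comment> \<open>only symmetry of \<open>M\<close>, positivity of \<open>\<alpha>\<close> and dominance are needed; the remaining
    hypotheses (disjointness, sign conditions on \<open>Q\<close>, the graph structure) are not\<close>
  note M = gen_modularity_matrix_symmetric[OF assms(1)]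
  define x where "x i = charvec n (S i)" for i
  show ?thesis
  proof (rule num_pos_eigenvalues_ge_if_form_pos[OF M])
    show "x i \<in> carrier_vec n" for i
      by (simp add: x_def charvec_def)
    fix c :: "nat \<Rightarrow> real" assume "\<exists>i<k. c i \<noteq> 0"
    then have "(\<Sum>i<k. \<Sum>j<k. c i * c j * Qmod M (S i) (S j)) > 0"
      using assms(7,8) Qmod_symmetric[OF M]
      by (intro diagonally_dominant_form_pos) (auto simp: atLeast0LessThan)
    then show "vec n (\<lambda>l. \<Sum>i<k. c i * x i $ l) \<bullet> (M *\<^sub>v vec n (\<lambda>l. \<Sum>i<k. c i * x i $ l)) > 0"
      using M by (simp add: lincomb_quadratic_form x_def charvec_def Qmod_def)
  qed
qed

end
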